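(* Let $q\ge2$ be even and $d\ge q+1$. Let $f$ be a density on $\mathbb{R}^d$ with mode $\boldsymbol\theta$, sufficiently smooth, whose $(q+1)$-st order term of the Taylor expansion around $\boldsymbol\theta$ is of the form $\prod_{i=1}^{q+1}\mathbf a_i^\top(\mathbf x-\boldsymbol\theta)$ with $\mathbf a_1,\ldots,\mathbf a_{q+1}\in\mathbb{R}^d$ linearly independent. Then there is a choice of $\mathrm Q$ for which the asymptotic bias of the kernel mode estimator with elliptic kernel is equal to zero, i.e. $\nabla(\nabla^\top\mathrm Q\nabla)^{q/2}f(\boldsymbol\theta)=\mathbf 0$.
   Context: Setting: $\mathrm A=\{Hf(\boldsymbol\theta)\}^{-1}$ is assumed to exist. For a radial $q$-th order kernel $K(\mathbf x)=G(\|\mathbf x\|)$ and a $d\times d$ matrix $\mathrm P$ with $|\det\mathrm P|=1$, the elliptic kernel is $K_{\mathrm P}(\mathbf x)=K(\mathrm P\mathbf x)$, and $\mathrm Q=\mathrm P^{-1}\mathrm P^{-\top}$ (a symmetric positive definite matrix; choosing $\mathrm Q$ is equivalent to choosing $\mathrm P$). The asymptotic bias of the kernel mode estimator with bandwidth $h_n$ and kernel $K_{\mathrm P}$ is $-\frac{\pi^{d/2}h_n^q}{2^{q-1}\Gamma(\frac{d+q}{2})\Gamma(\frac q2+1)}B_{d,q}(G)\,\mathrm A\,\nabla(\nabla^\top\mathrm Q\nabla)^{q/2}f(\boldsymbol\theta)$, where $B_{d,q}(G)=\int_0^\infty x^{d-1+q}G(x)dx\neq0$; hence it vanishes iff the vector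 $\nabla(\nabla^\top\mathrm Q\nabla)^{q/2}f(\boldsymbol\theta)$ (which depends only on the $(q+1)$-st order Taylor term of $f$ at $\boldsymbol\theta$) is zero. *)

theory Defs
  imports "HOL-Analysis.Analysis"
begin

definition pd :: "'n::finite \<Rightarrow> (real^'n \<Rightarrow> real) \<Rightarrow> real^'n \<Rightarrow> real" where
  "pd i g x = deriv (\<lambda>t. g (x + t *\<^sub>R axis i 1)) 0"

text \<open>Iterated partial derivatives (innermost index last in the list).\<close>
fun pds :: "'n::finite list \<Rightarrow> (real^'n \<Rightarrow> real) \<Rightarrow> real^'n \<Rightarrow> real" where
  "pds [] g = g"
| "pds (i # is) g = pd i (pds is g)"

definition smooth :: "(real^'n::finite \<Rightarrow> real) \<Rightarrow> bool" where
  "smooth g \<longleftrightarrow> (\<forall>is. continuous_on UNIV (pds is g) \<and>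
     (\<forall>i x. ((\<lambda>t. pds is g (x + t *\<^sub>R axis i 1)) has_real_derivative pds (i # is) g x) (at 0)))"

definition grad :: "(real^'n::finite \<Rightarrow> real) \<Rightarrow> real^'n \<Rightarrow> real^'n" where
  "grad g x = (\<chi> i. pd i g x)"

definition hess :: "(real^'n::finite \<Rightarrow> real) \<Rightarrow> real^'n \<Rightarrow> real^'n^'n" where
  "hess g x = (\<chi> j k. pd j (pd k g) x)"

definition opQ :: "real^'n^'n \<Rightarrow> (real^'n::finite \<Rightarrow> real) \<Rightarrow> real^'n \<Rightarrow> real" where
  "opQ Q g = (\<lambda>x. \<Sum>j\<in>UNIV. \<Sum>k\<in>UNIV. Q$j$k * pd j (pd k g) x)"

end

theory Submission
  imports Defs
begin

(* Let T be the symmetric tensor of (q+1)-st partial derivatives of f at \<theta>, so that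
   T(v, ..., v) = (q+1)! * prod_l (a_l . v).  Extending the a_l to a basis and passing to a dual
   basis yields a matrix M of determinant 1 each of whose columns c is orthogonal to all a_l but
   one.  Along the direction c the product prod_l (a_l . v) is therefore affine, so
   T(c, c, v, ..., v) = 0 for all v, and by polarisation T(c, c, -) = 0.  For Q = M M^T every
   component of grad (nabla^T Q nabla)^(q/2) f (\<theta>) is a linear combination of entries of
   sum_c T(c, c, -), hence zero; P = M^(-1) gives this Q. *)

section \<open>Schwarz's theorem and directional derivatives\<close>

lemma DERIV_along_line:
  fixes g :: "'a::real_normed_vector \<Rightarrow> real"
  assumes "\<And>y. ((\<lambda>t. g (y + t *\<^sub>R v)) has_real_derivative G y) (at 0)"
  shows "((\<lambda>t. g (x + t *\<^sub>R v)) has_real_derivative G (x + s *\<^sub>R v)) (at s)"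
proof -
  have "((\<lambda>t. g ((x + s *\<^sub>R v) + t *\<^sub>R v)) has_real_derivative G (x + s *\<^sub>R v)) (at 0)"
    by (rule assms)
  moreover have "(\<lambda>t. g ((x + s *\<^sub>R v) + t *\<^sub>R v)) = (\<lambda>t. g (x + (t + s) *\<^sub>R v))"
    by (simp add: algebra_simps)
  ultimately show ?thesis
    using DERIV_shift[of "\<lambda>t. g (x + t *\<^sub>R v)" _ 0 s] by simp
qed

lemma second_difference_mvt:
  fixes g :: "'a::real_normed_vector \<Rightarrow> real"
  assumes dg: "\<And>y. ((\<lambda>t. g (y + t *\<^sub>R u)) has_real_derivative g' y) (at 0)"
    and dg': "\<And>y. ((\<lambda>t. g' (y + t *\<^sub>R v)) has_real_derivative g'' y) (at 0)"
    and "h > 0"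
  obtains \<xi> \<eta> where "0 < \<xi>" "\<xi> < h" "0 < \<eta>" "\<eta> < h"
    "g (x + h *\<^sub>R u + h *\<^sub>R v) - g (x + h *\<^sub>R u) - g (x + h *\<^sub>R v) + g x
      = h * h * g'' (x + \<xi> *\<^sub>R u + \<eta> *\<^sub>R v)"
proof -
  define \<phi> where "\<phi> s = g ((x + h *\<^sub>R v) + s *\<^sub>R u) - g (x + s *\<^sub>R u)" for s
  define \<phi>' where "\<phi>' s = g' ((x + h *\<^sub>R v) + s *\<^sub>R u) - g' (x + s *\<^sub>R u)" for s
  have "DERIV \<phi> s :> \<phi>' s" for s
    unfolding \<phi>_def \<phi>'_def by (intro derivative_intros DERIV_along_line[where G = g'] dg)
  then obtain \<xi> where \<xi>: "0 < \<xi>" "\<xi> < h" "\<phi> h - \<phi> 0 = (h - 0) * \<phi>' \<xi>"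
    using MVT2[OF \<open>h > 0\<close>, of \<phi> \<phi>'] by blast
  define \<psi> where "\<psi> t = g' ((x + \<xi> *\<^sub>R u) + t *\<^sub>R v)" for t
  define \<psi>' where "\<psi>' t = g'' ((x + \<xi> *\<^sub>R u) + t *\<^sub>R v)" for t
  have "DERIV \<psi> t :> \<psi>' t" for t
    unfolding \<psi>_def \<psi>'_def by (rule DERIV_along_line[where G = g'']) (rule dg')
  then obtain \<eta> where \<eta>: "0 < \<eta>" "\<eta> < h" "\<psi> h - \<psi> 0 = (h - 0) * \<psi>' \<eta>"
    using MVT2[OF \<open>h > 0\<close>, of \<psi> \<psi>'] by blast
  have "g (x + h *\<^sub>R u + h *\<^sub>R v) - g (x + h *\<^sub>R u) - g (x + h *\<^sub>R v) + g x = \<phi> h - \<phi> 0"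
    unfolding \<phi>_def by (simp add: algebra_simps)
  also have "\<dots> = h * (\<psi> h - \<psi> 0)"
    using \<xi>(3) unfolding \<phi>'_def \<psi>_def by (simp add: algebra_simps)
  also have "\<dots> = h * h * g'' (x + \<xi> *\<^sub>R u + \<eta> *\<^sub>R v)"
    using \<eta>(3) unfolding \<psi>'_def by simp
  finally show ?thesis using that \<xi> \<eta> by blast
qed

lemma isCont_eq_if_values_meet_nearby:
  fixes A B :: "'a::metric_space \<Rightarrow> 'b::metric_space"
  assumes "isCont A x" "isCont B x"
    and meet: "\<And>e. e > 0 \<Longrightarrow> \<exists>p p'. dist p x < e \<and> dist p' x < e \<and> A p = B p'"
  shows "A x = B x"
proof -
  have "\<forall>n. \<exists>p p'. dist p x < 1 / Suc n \<and> dist p' x < 1 / Suc n \<and> A p = B p'"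
    using meet by simp
  then obtain p p' where pp: "\<And>n. dist (p n) x < 1 / Suc n" "\<And>n. dist (p' n) x < 1 / Suc n"
    "\<And>n. A (p n) = B (p' n)"
    by metis
  have lim: "(\<lambda>n. 1 / real (Suc n)) \<longlonglongrightarrow> 0"
    using LIMSEQ_inverse_real_of_nat by (simp add: inverse_eq_divide)
  have to_x: "r \<longlonglongrightarrow> x" if "\<And>n. dist (r n) x < 1 / Suc n" for r
  proof (rule tendsto_dist_iff[THEN iffD2], rule tendsto_sandwich[OF _ _ tendsto_const lim])
    show "\<forall>\<^sub>F n in sequentially. dist (r n) x \<le> 1 / real (Suc n)"
      using that by (intro always_eventually allI less_imp_le)
  qed simp
  have "(\<lambda>n. A (p n)) \<longlonglongrightarrow> A x"
    using isCont_tendsto_compose[OF assms(1) to_x[OF pp(1)]] .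
  moreover have "(\<lambda>n. A (p n)) \<longlonglongrightarrow> B x"
    using isCont_tendsto_compose[OF assms(2) to_x[OF pp(2)]] by (simp add: pp(3))
  ultimately show ?thesis by (rule LIMSEQ_unique)
qed

lemma pd_commute:
  fixes g :: "real^'n::finite \<Rightarrow> real"
  assumes dg: "\<And>k y. ((\<lambda>t. g (y + t *\<^sub>R axis k 1)) has_real_derivative pd k g y) (at 0)"
    and dgi: "\<And>y. ((\<lambda>t. pd i g (y + t *\<^sub>R axis j 1)) has_real_derivative pd j (pd i g) y) (at 0)"
    and dgj: "\<And>y. ((\<lambda>t. pd j g (y + t *\<^sub>R axis i 1)) has_real_derivative pd i (pd j g) y) (at 0)"
    and "continuous_on UNIV (pd j (pd i g))" "continuous_on UNIV (pd i (pd j g))"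
  shows "pd j (pd i g) x = pd i (pd j g) x"
proof (rule isCont_eq_if_values_meet_nearby[where A = "pd j (pd i g)" and B = "pd i (pd j g)"])
  show "isCont (pd j (pd i g)) x" "isCont (pd i (pd j g)) x"
    using assms(4,5) by (simp_all add: continuous_on_eq_continuous_at)
  fix e :: real assume "e > 0"
  define h where "h = e / 2"
  define u where "u = (axis i 1 :: real^'n)"
  define v where "v = (axis j 1 :: real^'n)"
  have h: "h > 0" using \<open>e > 0\<close> by (simp add: h_def)
  have near: "dist (x + a *\<^sub>R u + b *\<^sub>R v) x < e" if "0 < a" "a < h" "0 < b" "b < h" for a b
  proof -
    have "dist (x + a *\<^sub>R u + b *\<^sub>R v) x = norm (a *\<^sub>R u + b *\<^sub>R v)"
      by (simp add: dist_norm)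
    also have "\<dots> \<le> norm (a *\<^sub>R u) + norm (b *\<^sub>R v)"
      by (rule norm_triangle_ineq)
    also have "\<dots> = a + b" using that by (simp add: u_def v_def)
    finally show ?thesis using that by (simp add: h_def)
  qed
  obtain \<xi> \<eta> where mvt_ij: "0 < \<xi>" "\<xi> < h" "0 < \<eta>" "\<eta> < h"
    "g (x + h *\<^sub>R u + h *\<^sub>R v) - g (x + h *\<^sub>R u) - g (x + h *\<^sub>R v) + g x
      = h * h * pd j (pd i g) (x + \<xi> *\<^sub>R u + \<eta> *\<^sub>R v)"
    using second_difference_mvt[OF dg dgi h] unfolding u_def v_def by blast
  obtain \<xi>' \<eta>' where mvt_ji: "0 < \<xi>'" "\<xi>' < h" "0 < \<eta>'" "\<eta>' < h"
    "g (x + h *\<^sub>R v + h *\<^sub>R u) - g (x + h *\<^sub>R v) - g (x + h *\<^sub>R u) + g x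
      = h * h * pd i (pd j g) (x + \<xi>' *\<^sub>R v + \<eta>' *\<^sub>R u)"
    using second_difference_mvt[OF dg dgj h] unfolding u_def v_def by blast
  have "g (x + h *\<^sub>R v + h *\<^sub>R u) = g (x + h *\<^sub>R u + h *\<^sub>R v)"
    by (simp add: add_ac)
  then have "h * h * pd j (pd i g) (x + \<xi> *\<^sub>R u + \<eta> *\<^sub>R v)
      = h * h * pd i (pd j g) (x + \<xi>' *\<^sub>R v + \<eta>' *\<^sub>R u)"
    using mvt_ij(5) mvt_ji(5) by linarith
  then have "pd j (pd i g) (x + \<xi> *\<^sub>R u + \<eta> *\<^sub>R v) = pd i (pd j g) (x + \<eta>' *\<^sub>R u + \<xi>' *\<^sub>R v)"
    using h by (simp add: add_ac)
  then show "\<exists>p p'. dist p x < e \<and> dist p' x < e \<and> pd j (pd i g) p = pd i (pd j g) p'"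
    using near[OF mvt_ij(1-4)] near[OF mvt_ji(3,4,1,2)] by blast
qed

lemma DERIV_diagonal:
  fixes F :: "real \<Rightarrow> real \<Rightarrow> real"
  assumes dA: "\<And>s t. ((\<lambda>s. F s t) has_real_derivative A s t) (at s)"
    and dB: "\<And>s t. ((\<lambda>t. F s t) has_real_derivative B s t) (at t)"
    and cB: "continuous_on UNIV (\<lambda>(s, t). B s t)"
  shows "((\<lambda>t. F t t) has_real_derivative A t0 t0 + B t0 t0) (at t0)"
proof -
  have fx: "((\<lambda>x. F x t0) has_derivative (*) (A t0 t0)) (at t0 within UNIV)"
    using dA[of t0 t0] by (simp add: has_field_derivative_def)
  have fy: "((\<lambda>y. F x y) has_derivative blinfun_apply (blinfun_mult_right (B x y))) (at y within UNIV)"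
    for x y
    using dB[of x y] by (simp add: has_field_derivative_def)
  have "isCont (\<lambda>(s, t). B s t) (t0, t0)"
    using cB by (simp add: continuous_on_eq_continuous_at)
  then have "continuous (at (t0, t0) within UNIV \<times> UNIV) (\<lambda>(x, y). blinfun_mult_right (B x y))"
    using bounded_linear.continuous[OF bounded_linear_blinfun_mult_right]
    by (simp add: case_prod_beta')
  from has_derivative_partialsI[OF fx fy this]
  have "((\<lambda>(x, y). F x y) has_derivative (\<lambda>(tx, ty). A t0 t0 * tx + B t0 t0 * ty)) (at (t0, t0))"
    by simp
  moreover have "((\<lambda>t. (t, t)) has_derivative (\<lambda>h. (h, h))) (at t0)"
    by (intro derivative_eq_intros) auto
  ultimately have "((\<lambda>t. F t t) has_derivative (\<lambda>h. A t0 t0 * h + B t0 t0 * h)) (at t0)"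
    using has_derivative_compose[of "\<lambda>t. (t, t)"] by fastforce
  moreover have "(\<lambda>h. A t0 t0 * h + B t0 t0 * h) = (*) (A t0 t0 + B t0 t0)"
    by (auto simp: algebra_simps)
  ultimately show ?thesis
    unfolding has_field_derivative_def by simp
qed

lemma DERIV_line_sum_axes:
  fixes g :: "real^'n::finite \<Rightarrow> real" and w :: "real^'n"
  assumes dg: "\<And>k y. ((\<lambda>t. g (y + t *\<^sub>R axis k 1)) has_real_derivative pd k g y) (at 0)"
    and cg: "\<And>k. continuous_on UNIV (pd k g)"
  shows "((\<lambda>t. g (x + t *\<^sub>R (\<Sum>j\<in>S. w$j *\<^sub>R axis j 1))) has_real_derivative
           (\<Sum>j\<in>S. w$j * pd j g (x + t0 *\<^sub>R (\<Sum>j\<in>S. w$j *\<^sub>R axis j 1)))) (at t0)"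
proof (induction S arbitrary: x t0 rule: infinite_finite_induct)
  case (insert i S)
  \<comment> \<open>Adding one coordinate direction is the two-variable chain rule \<open>DERIV_diagonal\<close>, which is
    where continuity of the partial derivatives is needed.\<close>
  define W where "W = (\<Sum>j\<in>S. w$j *\<^sub>R axis j (1::real))"
  define e where "e = w$i *\<^sub>R axis i (1::real)"
  define F where "F s t = g ((x + s *\<^sub>R e) + t *\<^sub>R W)" for s t
  define A where "A s t = pd i g ((x + t *\<^sub>R W) + (w$i * s) *\<^sub>R axis i 1) * w$i" for s t
  define B where "B s t = (\<Sum>j\<in>S. w$j * pd j g ((x + s *\<^sub>R e) + t *\<^sub>R W))" for s t
  have "((\<lambda>s. g ((x + t *\<^sub>R W) + (w$i * s) *\<^sub>R axis i 1)) has_real_derivative A s t) (at s)"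
    for s t
    unfolding A_def
    by (rule DERIV_chain2[OF DERIV_along_line[OF dg]]) (auto intro!: derivative_eq_intros)
  moreover have "(\<lambda>s. g ((x + t *\<^sub>R W) + (w$i * s) *\<^sub>R axis i 1)) = (\<lambda>s. F s t)" for t
    unfolding F_def e_def by (simp add: algebra_simps)
  ultimately have dA: "((\<lambda>s. F s t) has_real_derivative A s t) (at s)" for s t
    by simp
  have dB: "((\<lambda>t. F s t) has_real_derivative B s t) (at t)" for s t
    unfolding F_def B_def W_def by (rule insert.IH)
  have "continuous_on UNIV (\<lambda>p. pd j g ((x + fst p *\<^sub>R e) + snd p *\<^sub>R W))" for j
    by (rule continuous_on_compose2[OF cg[of j]]) (auto intro!: continuous_intros)
  then have cB: "continuous_on UNIV (\<lambda>(s, t). B s t)"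
    unfolding B_def case_prod_beta' by (intro continuous_intros)
  have "(\<lambda>t. F t t) = (\<lambda>t. g (x + t *\<^sub>R (\<Sum>j\<in>insert i S. w$j *\<^sub>R axis j 1)))"
    using insert.hyps unfolding F_def W_def e_def by (simp add: algebra_simps)
  moreover have "A t0 t0 + B t0 t0
      = (\<Sum>j\<in>insert i S. w$j * pd j g (x + t0 *\<^sub>R (\<Sum>j\<in>insert i S. w$j *\<^sub>R axis j 1)))"
    using insert.hyps unfolding A_def B_def W_def e_def by (simp add: algebra_simps)
  ultimately show ?case
    using DERIV_diagonal[OF dA dB cB, of t0] by simp
qed simp_all

lemma DERIV_line_partials:
  fixes g :: "real^'n::finite \<Rightarrow> real"
  assumes "\<And>k y. ((\<lambda>t. g (y + t *\<^sub>R axis k 1)) has_real_derivative pd k g y) (at 0)"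
    and "\<And>k. continuous_on UNIV (pd k g)"
  shows "((\<lambda>t. g (x + t *\<^sub>R w)) has_real_derivative (\<Sum>j\<in>UNIV. w$j * pd j g (x + t0 *\<^sub>R w))) (at t0)"
proof -
  have "(\<Sum>j\<in>UNIV. w$j *\<^sub>R axis j 1) = w"
    using basis_expansion[of w] by (simp add: scalar_mult_eq_scaleR)
  then show ?thesis
    using DERIV_line_sum_axes[OF assms, where S = UNIV and w = w] by simp
qed

section \<open>Symmetric tensors of partial derivatives\<close>

lemma smooth_DERIV_pds:
  assumes "smooth f"
  shows "((\<lambda>t. pds L f (x + t *\<^sub>R axis i 1)) has_real_derivative pds (i # L) f x) (at 0)"
  using assms unfolding smooth_def by blast

lemma smooth_continuous_pds:
  assumes "smooth f"
  shows "continuous_on UNIV (pds L f)"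
  using assms unfolding smooth_def by blast

lemma smooth_pds_swap:
  assumes "smooth f"
  shows "pds (i # j # L) f = pds (j # i # L) f"
proof
  fix x
  have "pd i (pd j (pds L f)) x = pd j (pd i (pds L f)) x"
    by (rule pd_commute)
      (simp_all flip: pds.simps add: smooth_DERIV_pds[OF assms] smooth_continuous_pds[OF assms])
  then show "pds (i # j # L) f x = pds (j # i # L) f x"
    by simp
qed

lemma smooth_pds_append_Cons:
  assumes "smooth f"
  shows "pds (A @ j # B) f = pds (j # A @ B) f"
proof (induction A)
  case (Cons a A)
  then have "pds ((a # A) @ j # B) f = pds (a # j # A @ B) f"
    by simp
  also have "\<dots> = pds (j # a # A @ B) f"
    by (rule smooth_pds_swap[OF assms])
  finally show ?case by simp
qed simp

lemma smooth_pds_mset_eq: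
  assumes "smooth f" and "mset J = mset J'"
  shows "pds J f = pds J' f"
  using assms(2)
proof (induction J arbitrary: J')
  case (Cons j K)
  then have "j \<in> set J'"
    by (metis list.set_intros(1) set_mset_mset)
  then obtain A B where J': "J' = A @ j # B"
    by (meson split_list)
  with Cons.prems have "pds K f = pds (A @ B) f"
    by (intro Cons.IH) simp
  then have "pds (j # K) f = pds (j # A @ B) f"
    by simp
  also have "\<dots> = pds J' f"
    using smooth_pds_append_Cons[OF assms(1)] J' by simp
  finally show ?case .
qed simp

text \<open>A tensor of order \<open>n\<close> on \<open>real^'n\<close> is modelled as a function on index lists, of which
  only the lists of length \<open>n\<close> matter; \<open>tensor_form n U v\<close> is \<open>U(v, \<dots>, v)\<close>.\<close>

fun tensor_form :: "nat \<Rightarrow> ('n::finite list \<Rightarrow> real) \<Rightarrow> real^'n \<Rightarrow> real" where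
  "tensor_form 0 U v = U []"
| "tensor_form (Suc n) U v = (\<Sum>j\<in>UNIV. v$j * tensor_form n (\<lambda>J. U (j # J)) v)"

definition symmetric_tensor :: "('a list \<Rightarrow> real) \<Rightarrow> bool" where
  "symmetric_tensor U \<longleftrightarrow> (\<forall>J J'. mset J = mset J' \<longrightarrow> U J = U J')"

definition tensor_contract :: "real^'n::finite \<Rightarrow> ('n list \<Rightarrow> real) \<Rightarrow> 'n list \<Rightarrow> real" where
  "tensor_contract w U = (\<lambda>L. \<Sum>i\<in>UNIV. w$i * U (i # L))"

lemma symmetric_tensor_Cons: "symmetric_tensor U \<Longrightarrow> symmetric_tensor (\<lambda>J. U (j # J))"
  unfolding symmetric_tensor_def by auto

lemma symmetric_tensor_swap: "symmetric_tensor U \<Longrightarrow> U (i # j # L) = U (j # i # L)"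
  unfolding symmetric_tensor_def by (metis mset.simps(2) add_mset_commute)

lemma symmetric_tensor_sum:
  "(\<And>p. p \<in> A \<Longrightarrow> symmetric_tensor (U p)) \<Longrightarrow> symmetric_tensor (\<lambda>J. \<Sum>p\<in>A. U p J)"
  unfolding symmetric_tensor_def by (metis (mono_tags, lifting) sum.cong)

lemma symmetric_tensor_contract:
  "symmetric_tensor U \<Longrightarrow> symmetric_tensor (tensor_contract w U)"
  unfolding symmetric_tensor_def tensor_contract_def
  by (metis (mono_tags, lifting) mset.simps(2) sum.cong)

lemma symmetric_tensor_pds: "smooth f \<Longrightarrow> symmetric_tensor (\<lambda>J. pds J f x)"
  unfolding symmetric_tensor_def using smooth_pds_mset_eq by metis

lemma tensor_contract_axis:
  fixes U :: "'n::finite list \<Rightarrow> real"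
  shows "tensor_contract (axis i 1) U = (\<lambda>L. U (i # L))"
proof
  fix L
  have "(axis i 1 :: real^'n)$k * U (k # L) = (if k = i then U (k # L) else 0)" for k
    by (simp add: axis_def)
  then show "tensor_contract (axis i 1) U L = U (i # L)"
    unfolding tensor_contract_def by (simp add: sum.delta')
qed

lemma tensor_form_sum:
  "tensor_form n (\<lambda>J. \<Sum>p\<in>A. c p * U p J) v = (\<Sum>p\<in>A. c p * tensor_form n (U p) v)"
proof (induction n arbitrary: U)
  case (Suc n)
  have "tensor_form (Suc n) (\<lambda>J. \<Sum>p\<in>A. c p * U p J) v
      = (\<Sum>j\<in>UNIV. v$j * (\<Sum>p\<in>A. c p * tensor_form n (\<lambda>J. U p (j # J)) v))"
    by (simp only: tensor_form.simps Suc.IH)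
  also have "\<dots> = (\<Sum>p\<in>A. \<Sum>j\<in>UNIV. c p * (v$j * tensor_form n (\<lambda>J. U p (j # J)) v))"
    by (simp only: sum_distrib_left mult.left_commute sum.swap[of _ UNIV])
  also have "\<dots> = (\<Sum>p\<in>A. c p * tensor_form (Suc n) (U p) v)"
    by (simp only: tensor_form.simps sum_distrib_left)
  finally show ?case .
qed simp

lemma tensor_form_Suc_contract: "tensor_form (Suc n) U v = tensor_form n (tensor_contract v U) v"
  using tensor_form_sum[of n "\<lambda>j. v$j" "\<lambda>j J. U (j # J)" UNIV v]
  by (simp add: tensor_contract_def)

lemma DERIV_tensor_form_entries:
  assumes "\<And>J. (V J has_real_derivative V' J) (at t)"
  shows "((\<lambda>t. tensor_form n (\<lambda>J. V J t) w) has_real_derivative tensor_form n V' w) (at t)"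
  using assms
proof (induction n arbitrary: V V')
  case (Suc n)
  show ?case
    unfolding tensor_form.simps by (intro DERIV_sum DERIV_cmult Suc.IH Suc.prems)
qed simp

lemma DERIV_tensor_form_line:
  assumes "symmetric_tensor U"
  shows "((\<lambda>t. tensor_form (Suc n) U (v + t *\<^sub>R w)) has_real_derivative
          real (Suc n) * tensor_form n (tensor_contract w U) (v + t *\<^sub>R w)) (at t)"
  using assms
proof (induction n arbitrary: U)
  case 0
  show ?case
    by (auto simp: tensor_contract_def intro!: derivative_eq_intros)
next
  case (Suc n)
  define y where "y = v + t *\<^sub>R w"
  have contract_Cons: "tensor_contract w (\<lambda>J. U (j # J)) = (\<lambda>J. tensor_contract w U (j # J))" for j
    unfolding tensor_contract_def using symmetric_tensor_swap[OF Suc.prems, of j] by simp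
  have "((\<lambda>t. tensor_form (Suc (Suc n)) U (v + t *\<^sub>R w)) has_real_derivative
      (\<Sum>j\<in>UNIV. w$j * tensor_form (Suc n) (\<lambda>J. U (j # J)) y
        + real (Suc n) * tensor_form n (\<lambda>J. tensor_contract w U (j # J)) y * y$j)) (at t)"
    unfolding tensor_form.simps(2)[of "Suc n"] y_def
    by (intro DERIV_sum DERIV_mult
        Suc.IH[OF symmetric_tensor_Cons[OF Suc.prems], unfolded contract_Cons])
      (auto intro!: derivative_eq_intros)
  moreover have "(\<Sum>j\<in>UNIV. w$j * tensor_form (Suc n) (\<lambda>J. U (j # J)) y)
      = tensor_form (Suc n) (tensor_contract w U) y"
    using tensor_form_sum[of "Suc n" "\<lambda>i. w$i" "\<lambda>i J. U (i # J)" UNIV y]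
    by (simp add: tensor_contract_def)
  moreover have "(\<Sum>j\<in>UNIV. real (Suc n) * tensor_form n (\<lambda>J. tensor_contract w U (j # J)) y * y$j)
      = real (Suc n) * tensor_form (Suc n) (tensor_contract w U) y"
    by (simp add: sum_distrib_left mult_ac)
  ultimately show ?case
    unfolding y_def by (simp add: sum.distrib algebra_simps)
qed

lemma symmetric_tensor_eq_0:
  assumes "symmetric_tensor U" and "\<And>v. tensor_form n U v = 0" and "length J = n"
  shows "U J = 0"
  using assms
proof (induction n arbitrary: U J)
  case 0
  then show ?case by simp
next
  case (Suc n)
  then obtain i L where J: "J = i # L" "length L = n"
    by (cases J) auto
  have "tensor_form n (\<lambda>L. U (i # L)) y = 0" for y
  proof -
    have "((\<lambda>t. tensor_form (Suc n) U (y + t *\<^sub>R axis i 1)) has_real_derivative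
        real (Suc n) * tensor_form n (\<lambda>L. U (i # L)) y) (at 0)"
      using DERIV_tensor_form_line[OF Suc.prems(1), where v = y and w = "axis i 1" and t = 0]
      by (simp add: tensor_contract_axis)
    moreover have "(\<lambda>t. tensor_form (Suc n) U (y + t *\<^sub>R axis i 1)) = (\<lambda>t. 0)"
      by (intro ext Suc.prems(2))
    ultimately show ?thesis
      using DERIV_unique[OF _ DERIV_const] by fastforce
  qed
  then show ?case
    using Suc.IH[OF symmetric_tensor_Cons[OF Suc.prems(1)] _ J(2)] J(1) by simp
qed

lemma tensor_form_contract2_eq_0_if_affine:
  assumes sym: "symmetric_tensor U"
    and affine: "\<And>t. tensor_form (Suc (Suc n)) U (v + t *\<^sub>R w) = \<alpha> + t * \<beta>"
  shows "tensor_form n (tensor_contract w (tensor_contract w U)) v = 0"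
proof -
  have "real (Suc (Suc n)) * tensor_form (Suc n) (tensor_contract w U) (v + t *\<^sub>R w) = \<beta>" for t
  proof (rule DERIV_unique)
    show "((\<lambda>t. tensor_form (Suc (Suc n)) U (v + t *\<^sub>R w)) has_real_derivative \<beta>) (at t)"
      unfolding affine by (auto intro!: derivative_eq_intros)
  qed (rule DERIV_tensor_form_line[OF sym])
  then have "tensor_form (Suc n) (tensor_contract w U) (v + t *\<^sub>R w) = \<beta> / real (Suc (Suc n))" for t
    by (simp add: field_simps del: of_nat_Suc)
  then have "((\<lambda>t. tensor_form (Suc n) (tensor_contract w U) (v + t *\<^sub>R w)) has_real_derivative 0) (at 0)"
    by simp
  moreover have "((\<lambda>t. tensor_form (Suc n) (tensor_contract w U) (v + t *\<^sub>R w)) has_real_derivative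
      real (Suc n) * tensor_form n (tensor_contract w (tensor_contract w U)) v) (at 0)"
    using DERIV_tensor_form_line[OF symmetric_tensor_contract[OF sym],
        where n = n and v = v and w = w and t = 0]
    by simp
  ultimately show ?thesis
    using DERIV_unique by fastforce
qed

lemma smooth_higher_deriv_line:
  assumes "smooth f"
  shows "(deriv ^^ n) (\<lambda>t. f (x + t *\<^sub>R w)) = (\<lambda>t. tensor_form n (\<lambda>J. pds J f (x + t *\<^sub>R w)) w)"
proof (induction n)
  case (Suc n)
  have "((\<lambda>t. tensor_form n (\<lambda>J. pds J f (x + t *\<^sub>R w)) w) has_real_derivative
      tensor_form (Suc n) (\<lambda>J. pds J f (x + t *\<^sub>R w)) w) (at t)" for t
    unfolding tensor_form_Suc_contract tensor_contract_def pds.simps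
    using smooth_DERIV_pds[OF assms] smooth_continuous_pds[OF assms, of "_ # _"]
    by (intro DERIV_tensor_form_entries DERIV_line_partials) simp_all
  then show ?case
    using Suc.IH DERIV_imp_deriv by fastforce
qed simp

lemma smooth_higher_deriv_line_0:
  assumes "smooth f"
  shows "(deriv ^^ n) (\<lambda>t. f (x + t *\<^sub>R w)) 0 = tensor_form n (\<lambda>J. pds J f x) w"
  by (simp add: smooth_higher_deriv_line[OF assms])

section \<open>A unimodular dual basis\<close>

lemma matrix_inv_inverse:
  fixes A :: "'a::semiring_1^'n^'n"
  assumes "invertible A"
  shows "A ** matrix_inv A = mat 1" and "matrix_inv A ** A = mat 1"
  using someI_ex[OF assms[unfolded invertible_def]] unfolding matrix_inv_def by auto

lemma matrix_inv_matrix_inv: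
  fixes A :: "'a::semiring_1^'n^'n"
  assumes "invertible A"
  shows "matrix_inv (matrix_inv A) = A"
proof -
  have "invertible (matrix_inv A)"
    using matrix_inv_inverse[OF assms] unfolding invertible_def by blast
  then have "matrix_inv (matrix_inv A) = (A ** matrix_inv A) ** matrix_inv (matrix_inv A)"
    by (simp add: matrix_inv_inverse[OF assms] matrix_mul_lid)
  also have "\<dots> = A"
    by (simp add: matrix_mul_assoc[symmetric] matrix_inv_inverse \<open>invertible (matrix_inv A)\<close>
        matrix_mul_rid)
  finally show ?thesis .
qed

lemma det_matrix_inv:
  fixes A :: "real^'n::finite^'n"
  assumes "invertible A"
  shows "det (matrix_inv A) = inverse (det A)"
  using det_mul[of A "matrix_inv A"] invertible_det_nz[of A] assms
  by (simp add: matrix_inv_inverse det_I field_simps)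

lemma independent_to_axes_matrix_exists:
  fixes A :: "(real^'n::finite) set"
  assumes "independent A"
  obtains G :: "real^'n^'n" where "invertible G" and "\<And>x. x \<in> A \<Longrightarrow> G *v x \<in> Basis"
proof -
  obtain B where B: "A \<subseteq> B" "B \<subseteq> UNIV" "independent B" "UNIV \<subseteq> span B"
    by (rule maximal_independent_subset_extend[OF subset_UNIV assms])
  have "card B = dim (UNIV :: (real^'n) set)"
    by (rule basis_card_eq_dim[OF subset_UNIV B(4) B(3)])
  then obtain g :: "real^'n \<Rightarrow> real^'n" where g: "linear g" "g ` B = Basis" "g ` UNIV = UNIV" "inj_on g UNIV"
    using basis_to_basis_subspace_isomorphism[OF subspace_UNIV subspace_UNIV refl
        subset_UNIV B(3,4) _ subset_UNIV independent_Basis] span_Basis dim_UNIV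
    by auto
  have "(*v) (matrix g) = g"
    using g(1) by (rule matrix_vector_mul)
  then show thesis
    using g B(1) by (intro that[of "matrix g"]) (auto simp: invertible_eq_bij bij_def simp flip: g(2))
qed
lemma Basis_vec_eq_axis:
  fixes b :: "real^'n::finite"
  assumes "b \<in> Basis" and "b$r \<noteq> 0"
  shows "b = axis r 1"
  using assms by (auto simp: Basis_vec_def axis_def split: if_split_asm)

text \<open>The rows of an invertible matrix sending the \<open>a l\<close> to distinct coordinate vectors form a
  basis dual to an extension of the \<open>a l\<close>; rescaling one row makes the determinant \<open>1\<close>.\<close>

lemma unimodular_dual_matrix_exists:
  fixes a :: "nat \<Rightarrow> real^'n::finite"
  assumes inj: "inj_on a {..<k}" and indep: "independent (a ` {..<k})"
  obtains M :: "real^'n^'n"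
  where "det M = 1" and "\<And>r. \<exists>l0. \<forall>l<k. l \<noteq> l0 \<longrightarrow> a l \<bullet> column r M = 0"
proof -
  obtain G :: "real^'n^'n" where G: "invertible G" "\<And>x. x \<in> a ` {..<k} \<Longrightarrow> G *v x \<in> Basis"
    by (rule independent_to_axes_matrix_exists[OF indep]) blast
  obtain r0 :: 'n where True by blast
  define s where "s r = (if r = r0 then inverse (det G) else 1)" for r
  define G' where "G' = (\<chi> i. if i = r0 then inverse (det G) *s G$i else G$i)"
  have "det G' = 1"
    using det_row_mul[of r0 "inverse (det G)" "\<lambda>i. G$i" "\<lambda>i. G$i"] G(1)
    by (simp add: G'_def invertible_det_nz)
  have row: "a l \<bullet> row r G' = s r * (G *v a l)$r" for l r
    by (simp add: G'_def s_def row_def inner_vec_def matrix_vector_mult_def sum_distrib_left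
        mult_ac)
  have unique: "l = l'" if "l < k" "l' < k" "(G *v a l)$r \<noteq> 0" "(G *v a l')$r \<noteq> 0" for l l' r
  proof -
    have "G *v a l = axis r 1" "G *v a l' = axis r 1"
      using Basis_vec_eq_axis G(2) that by auto
    then have "a l = a l'"
      using G(1) by (auto simp: invertible_eq_bij bij_def inj_def)
    then show ?thesis
      using inj that by (auto dest: inj_onD)
  qed
  have "\<exists>l0. \<forall>l<k. l \<noteq> l0 \<longrightarrow> a l \<bullet> column r (transpose G') = 0" for r
  proof (cases "\<exists>l0<k. (G *v a l0)$r \<noteq> 0")
    case True
    then obtain l0 where "l0 < k" "(G *v a l0)$r \<noteq> 0"
      by blast
    then have "\<forall>l<k. l \<noteq> l0 \<longrightarrow> (G *v a l)$r = 0"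
      using unique by blast
    then show ?thesis
      by (auto simp: row)
  qed (auto simp: row)
  then show thesis
    using \<open>det G' = 1\<close> by (intro that[of "transpose G'"]) (simp_all add: det_transpose)
qed

lemma prod_inner_affine:
  fixes a :: "nat \<Rightarrow> real^'n::finite"
  assumes "\<forall>l<k. l \<noteq> l0 \<longrightarrow> a l \<bullet> w = 0"
  shows "\<exists>\<alpha> \<beta>. \<forall>t. (\<Prod>l<k. a l \<bullet> (v + t *\<^sub>R w)) = \<alpha> + t * \<beta>"
proof (cases "l0 < k")
  case True
  define R where "R = (\<Prod>l\<in>{..<k} - {l0}. a l \<bullet> v)"
  have "(\<Prod>l<k. a l \<bullet> (v + t *\<^sub>R w)) = (a l0 \<bullet> v) * R + t * ((a l0 \<bullet> w) * R)" for t
  proof -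
    have "(\<Prod>l<k. a l \<bullet> (v + t *\<^sub>R w))
        = (a l0 \<bullet> (v + t *\<^sub>R w)) * (\<Prod>l\<in>{..<k} - {l0}. a l \<bullet> (v + t *\<^sub>R w))"
      using True by (simp add: prod.remove)
    also have "(\<Prod>l\<in>{..<k} - {l0}. a l \<bullet> (v + t *\<^sub>R w)) = R"
      unfolding R_def using assms by (intro prod.cong) (auto simp: inner_add_right)
    finally show ?thesis
      by (simp add: inner_add_right algebra_simps)
  qed
  then show ?thesis by blast
next
  case False
  then have "(\<Prod>l<k. a l \<bullet> (v + t *\<^sub>R w)) = (\<Prod>l<k. a l \<bullet> v) + t * 0" for t
    using assms by (auto intro!: prod.cong simp: inner_add_right)
  then show ?thesis by blast
qed

text \<open>If every column \<open>c\<close> of \<open>M\<close> is orthogonal to all but one of the \<open>a l\<close>, then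
  \<open>v \<mapsto> T(v, \<dots>, v)\<close> is affine along \<open>c\<close>, so \<open>T(c, c, \<dots>)\<close> vanishes; summing over the
  columns gives the trace of \<open>T\<close> against \<open>M M\<^sup>T\<close>.\<close>

lemma product_tensor_trace_eq_0:
  fixes T :: "'n::finite list \<Rightarrow> real" and a :: "nat \<Rightarrow> real^'n" and M :: "real^'n^'n"
  assumes sym: "symmetric_tensor T"
    and form: "\<And>v. tensor_form k T v = C * (\<Prod>l<k. a l \<bullet> v)"
    and cols: "\<And>r. \<exists>l0. \<forall>l<k. l \<noteq> l0 \<longrightarrow> a l \<bullet> column r M = 0"
    and len: "length L + 2 = k"
  shows "(\<Sum>j\<in>UNIV. \<Sum>i\<in>UNIV. (M ** transpose M)$j$i * T (j # i # L)) = 0"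
proof -
  define n where "n = length L"
  have k: "Suc (Suc n) = k"
    using len by (simp add: n_def)
  define T2 where "T2 r = tensor_contract (column r M) (tensor_contract (column r M) T)" for r
  define W where "W = (\<lambda>L. \<Sum>r\<in>UNIV. T2 r L)"
  have "tensor_form n (T2 r) v = 0" for r v
  proof -
    obtain \<alpha> \<beta> where affine: "\<And>t. (\<Prod>l<k. a l \<bullet> (v + t *\<^sub>R column r M)) = \<alpha> + t * \<beta>"
      using cols[of r] prod_inner_affine by metis
    have "tensor_form (Suc (Suc n)) T (v + t *\<^sub>R column r M) = C * \<alpha> + t * (C * \<beta>)" for t
      unfolding k form affine by (simp add: algebra_simps)
    then show ?thesis
      unfolding T2_def by (rule tensor_form_contract2_eq_0_if_affine[OF sym])
  qed
  then have "tensor_form n W v = 0" for v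
    using tensor_form_sum[of n "\<lambda>_. 1" T2 UNIV v] by (simp add: W_def)
  moreover have "symmetric_tensor W"
    unfolding W_def T2_def by (intro symmetric_tensor_sum symmetric_tensor_contract sym)
  ultimately have "W L = 0"
    using symmetric_tensor_eq_0 n_def by blast
  moreover have "W L = (\<Sum>j\<in>UNIV. \<Sum>i\<in>UNIV. (M ** transpose M)$j$i * T (j # i # L))"
  proof -
    have "W L = (\<Sum>r\<in>UNIV. \<Sum>i\<in>UNIV. \<Sum>j\<in>UNIV. M$i$r * M$j$r * T (j # i # L))"
      by (simp add: W_def T2_def tensor_contract_def column_def sum_distrib_left mult.assoc)
    also have "\<dots> = (\<Sum>j\<in>UNIV. \<Sum>i\<in>UNIV. \<Sum>r\<in>UNIV. M$j$r * M$i$r * T (j # i # L))"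
      by (subst sum.swap, subst (2) sum.swap, subst sum.swap) (simp add: mult_ac)
    also have "\<dots> = (\<Sum>j\<in>UNIV. \<Sum>i\<in>UNIV. (M ** transpose M)$j$i * T (j # i # L))"
      by (simp add: matrix_matrix_mult_def transpose_def sum_distrib_right)
    finally show ?thesis .
  qed
  ultimately show ?thesis by simp
qed

section \<open>Powers of the operator \<open>\<nabla>\<^sup>T Q \<nabla>\<close>\<close>

lemma smooth_pd_sum_pds:
  assumes "smooth f" and "finite A"
  shows "pd i (\<lambda>x. \<Sum>p\<in>A. c p * pds (J p) f x) = (\<lambda>x. \<Sum>p\<in>A. c p * pds (i # J p) f x)"
proof
  fix x
  have "((\<lambda>t. \<Sum>p\<in>A. c p * pds (J p) f (x + t *\<^sub>R axis i 1)) has_real_derivative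
      (\<Sum>p\<in>A. c p * pds (i # J p) f x)) (at 0)"
    using smooth_DERIV_pds[OF assms(1)] by (intro DERIV_sum DERIV_cmult)
  then show "pd i (\<lambda>x. \<Sum>p\<in>A. c p * pds (J p) f x) x = (\<Sum>p\<in>A. c p * pds (i # J p) f x)"
    unfolding pd_def by (rule DERIV_imp_deriv)
qed

lemma smooth_opQ_sum_pds:
  assumes "smooth f" and "finite S"
  shows "opQ Q (\<lambda>x. \<Sum>L\<in>S. c L * pds L f x)
    = (\<lambda>x. \<Sum>(j, k, L)\<in>UNIV \<times> UNIV \<times> S. (Q$j$k * c L) * pds (j # k # L) f x)"
proof
  fix x
  have "opQ Q (\<lambda>x. \<Sum>L\<in>S. c L * pds L f x) x
      = (\<Sum>j\<in>UNIV. \<Sum>k\<in>UNIV. Q$j$k * (\<Sum>L\<in>S. c L * pds (j # k # L) f x))"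
    unfolding opQ_def smooth_pd_sum_pds[OF assms] ..
  also have "\<dots> = (\<Sum>(j, k, L)\<in>UNIV \<times> UNIV \<times> S. (Q$j$k * c L) * pds (j # k # L) f x)"
    using assms(2) by (simp add: sum.cartesian_product sum_distrib_left mult.assoc)
  finally show "opQ Q (\<lambda>x. \<Sum>L\<in>S. c L * pds L f x) x = \<dots>" .
qed

lemma opQ_power_pds_expansion:
  fixes f :: "real^'n::finite \<Rightarrow> real"
  assumes "smooth f"
  obtains S c where "finite S" and "\<forall>L\<in>S. length L = 2 * m"
    and "(opQ Q ^^ m) f = (\<lambda>x. \<Sum>L\<in>S. c L * pds L f x)"
proof (induction m arbitrary: thesis)
  case 0
  show ?case
    by (rule 0[of "{[]}" "\<lambda>_. 1"]) auto
next
  case (Suc m)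
  obtain S c where S: "finite S" "\<forall>L\<in>S. length L = 2 * m"
    and pow: "(opQ Q ^^ m) f = (\<lambda>x. \<Sum>L\<in>S. c L * pds L f x)"
    using Suc.IH by blast
  define \<iota> where "\<iota> = (\<lambda>(j, k, L). j # k # L :: 'n list)"
  define c' where "c' L = Q $ hd L $ hd (tl L) * c (tl (tl L))" for L
  have inj: "inj_on \<iota> (UNIV \<times> UNIV \<times> S)"
    unfolding \<iota>_def inj_on_def by auto
  have "(opQ Q ^^ Suc m) f = (\<lambda>x. \<Sum>p\<in>UNIV \<times> UNIV \<times> S. c' (\<iota> p) * pds (\<iota> p) f x)"
    using smooth_opQ_sum_pds[OF assms S(1)] by (simp add: pow c'_def \<iota>_def case_prod_beta')
  also have "\<dots> = (\<lambda>x. \<Sum>L\<in>\<iota> ` (UNIV \<times> UNIV \<times> S). c' L * pds L f x)"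
    by (simp only: sum.reindex[OF inj] comp_def)
  finally show ?case
    using S by (intro Suc.prems[of "\<iota> ` (UNIV \<times> UNIV \<times> S)" c']) (auto simp: \<iota>_def)
qed

lemma pd_opQ_power_Suc:
  fixes f :: "real^'n::finite \<Rightarrow> real"
  assumes "smooth f"
  obtains S c where "finite S" and "\<forall>L\<in>S. length L = 2 * m"
    and "\<And>i x. pd i ((opQ Q ^^ Suc m) f) x
      = (\<Sum>L\<in>S. c L * (\<Sum>j\<in>UNIV. \<Sum>k\<in>UNIV. Q$j$k * pds (j # k # i # L) f x))"
proof -
  obtain S c where S: "finite S" "\<forall>L\<in>S. length L = 2 * m"
    and pow: "(opQ Q ^^ m) f = (\<lambda>x. \<Sum>L\<in>S. c L * pds L f x)"
    by (rule opQ_power_pds_expansion[OF assms])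
  define c' where "c' = (\<lambda>(j, k, L). Q$j$k * c L)"
  define J' where "J' = (\<lambda>(j, k, L). j # k # L :: 'n list)"
  have fin: "finite (UNIV \<times> UNIV \<times> S :: ('n \<times> 'n \<times> 'n list) set)"
    using S(1) by simp
  have "(opQ Q ^^ Suc m) f = (\<lambda>x. \<Sum>p\<in>UNIV \<times> UNIV \<times> S. c' p * pds (J' p) f x)"
    using smooth_opQ_sum_pds[OF assms S(1)] by (simp add: pow c'_def J'_def case_prod_beta')
  then have "pd i ((opQ Q ^^ Suc m) f) x = (\<Sum>p\<in>UNIV \<times> UNIV \<times> S. c' p * pds (i # J' p) f x)"
    for i x
    by (simp only: smooth_pd_sum_pds[OF assms fin])
  also have "\<dots> i x = (\<Sum>(j, k, L)\<in>UNIV \<times> UNIV \<times> S. Q$j$k * c L * pds (j # k # i # L) f x)"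
    for i x
    unfolding c'_def J'_def case_prod_beta'
    by (intro sum.cong refl arg_cong[where f = "\<lambda>g. _ * g x"] smooth_pds_mset_eq[OF assms]) simp
  also have "\<dots> i x = (\<Sum>L\<in>S. c L * (\<Sum>j\<in>UNIV. \<Sum>k\<in>UNIV. Q$j$k * pds (j # k # i # L) f x))"
    for i x
    using S(1)
    by (simp add: sum.cartesian_product[symmetric] sum_distrib_left sum.swap[of _ S] mult_ac)
  finally show thesis
    using S that by blast
qed

theorem proposition2:
  fixes f :: "real^'n \<Rightarrow> real" and \<theta> :: "real^'n"
    and q :: nat and a :: "nat \<Rightarrow> real^'n"
  assumes q_even: "even q" and q_ge: "q \<ge> 2"
    and dim: "CARD('n) \<ge> q + 1"
    and nonneg: "\<forall>x. f x \<ge> 0"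
    and integrable: "integrable lborel f"
    and integral_one: "integral\<^sup>L lborel f = 1"
    and mode: "\<forall>x. f x \<le> f \<theta>"
    and smooth: "smooth f"
    and hess_inv: "invertible (hess f \<theta>)"
    and taylor: "\<forall>v. (deriv ^^ (q + 1)) (\<lambda>t. f (\<theta> + t *\<^sub>R v)) 0
                     = fact (q + 1) * (\<Prod>i<q + 1. a i \<bullet> v)"
    and a_inj: "inj_on a {..<q + 1}"
    and a_indep: "independent (a ` {..<q + 1})"
  shows "\<exists>P :: real^'n^'n. \<bar>det P\<bar> = 1 \<and>
           (let Q = matrix_inv P ** transpose (matrix_inv P)
            in grad ((opQ Q ^^ (q div 2)) f) \<theta> = 0)"
proof -
  \<comment> \<open>Only smoothness, the form of the Taylor term and the \<open>a l\<close> are used; the remaining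
    hypotheses are what make the bias formula meaningful.\<close>
  define m where "m = q div 2 - 1"
  have q: "q div 2 = Suc m" "q = 2 * m + 2"
    using q_even q_ge by (auto simp: m_def elim!: evenE)
  define T where "T J = pds J f \<theta>" for J
  have T_sym: "symmetric_tensor T"
    unfolding T_def by (rule symmetric_tensor_pds[OF smooth])
  have T_form: "tensor_form (q + 1) T v = fact (q + 1) * (\<Prod>l<q + 1. a l \<bullet> v)" for v
    using taylor smooth_higher_deriv_line_0[OF smooth] unfolding T_def by metis
  obtain M :: "real^'n^'n" where "det M = 1"
    and M_cols: "\<And>r. \<exists>l0. \<forall>l<q + 1. l \<noteq> l0 \<longrightarrow> a l \<bullet> column r M = 0"
    by (rule unimodular_dual_matrix_exists[OF a_inj a_indep]) blast
  define Q where "Q = M ** transpose M"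
  have trace_0: "(\<Sum>j\<in>UNIV. \<Sum>k\<in>UNIV. Q$j$k * T (j # k # L)) = 0" if "length L + 2 = q + 1" for L
    unfolding Q_def by (rule product_tensor_trace_eq_0[OF T_sym T_form M_cols that])
  obtain S c where S: "\<forall>L\<in>S. length L = 2 * m"
    and pd_eq: "\<And>i. pd i ((opQ Q ^^ Suc m) f) \<theta>
      = (\<Sum>L\<in>S. c L * (\<Sum>j\<in>UNIV. \<Sum>k\<in>UNIV. Q$j$k * T (j # k # i # L)))"
    unfolding T_def by (rule pd_opQ_power_Suc[OF smooth, where m = m and Q = Q]) blast
  have "grad ((opQ Q ^^ (q div 2)) f) \<theta> = 0"
    using S unfolding q(1) grad_def pd_eq by (auto intro!: sum.neutral simp: vec_eq_iff trace_0 q(2))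
  moreover have "invertible M"
    using \<open>det M = 1\<close> by (simp add: invertible_det_nz)
  ultimately show ?thesis
    using \<open>det M = 1\<close>
    by (intro exI[of _ "matrix_inv M"]) (simp add: matrix_inv_matrix_inv det_matrix_inv Q_def)
qed

end
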